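(* Let $N\ge5$ be odd. Let $h=(h_\alpha,h_\beta,h_1,\dots,h_{N-1})$ and $h'=(h'_\alpha,h'_\beta,h'_1,\dots,h'_{N-1})$ be real parameter vectors with all entries nonzero, and let $S$ be a real nonsingular $(N+1)\times(N+1)$ matrix satisfying $$S\tilde A(h)=\tilde A(h')S,\qquad Se_1=e_1,\qquad e_2^TS=e_2^T,$$ where $\tilde A$ is defined in the context. Then for every $k$ with $3\le k\le N-1$, the first $k$ columns of $S$ are $e_1,\ e_2,\ \varepsilon_3e_3,\ \dots,\ \varepsilon_ke_k$ with $\varepsilon_j\in\{1,-1\}$, and moreover $h_\alpha=h'_\alpha$, $|h_\beta|=|h'_\beta|$ and $|h_j|=|h'_j|$ for all $1\le j\le k-2$.
   Context: For an integer $N\ge1$ and real parameters $h=(h_\alpha,h_\beta,h_1,\dots,h_{N-1})$, set $(c_1,c_2,c_3,\dots,c_{N+1})=(h_\alpha,h_\beta,h_1,\dots,h_{N-1})$ and let $A(h)$ be the real $(N+2)\times(N+2)$ tridiagonal matrix with $A_{j,j+1}=c_j$, $A_{j+1,j}=-c_j$ for $j=1,\dots,N+1$ and all other entries zero. For odd $N$ and all parameters nonzero, define the $(N+1)\times(N+1)$ matrix $\tilde A(h)$ as follows (with the conventions $h_{-1}:=h_\alpha$, $h_0:=h_\beta$): its first $N$ columns coincide with the first $N$ columns of the leading $(N+1)\times(N+1)$ principal submatrix of $A(h)$, i.e. $\tilde A_{jl}=A_{jl}$ for $1\le j\le N+1$, $1\le l\le N$; its last column has $\tilde A_{k,N+1}=0$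 for even $k$ and, for odd $k=2i-1$ ($1\le i\le (N+1)/2$), $$\tilde A_{2i-1,N+1}=h_{N-1}^2\,\frac{\prod_{j=i}^{(N-1)/2}h_{2j-2}}{\prod_{j=i}^{(N+1)/2}h_{2j-3}}+\delta_{i,(N+1)/2}\,h_{N-2}.$$ (In particular $\tilde A_{N,N+1}=h_{N-2}+h_{N-1}^2/h_{N-2}$ and $\tilde A_{N+1,N+1}=0$.) This matrix is the system matrix of the minimal (observable) subsystem obtained from $(A,e_1,e_2^T)$ for odd $N$. $e_j$ denotes the $j$-th standard basis vector; empty products equal $1$. *)

theory Defs
  imports "Jordan_Normal_Form.Matrix" "Jordan_Normal_Form.Determinant"
begin

(* Parameter vector h = (h_alpha, h_beta, h_1, ..., h_{N-1}) is encoded as c :: nat => real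
   with (c 1, c 2, c 3, ..., c (N+1)) = (h_alpha, h_beta, h_1, ..., h_{N-1}),
   i.e. h_m = c (m+2) for m >= -1 (h_{-1} = h_alpha, h_0 = h_beta).
   Matrices are Jordan_Normal_Form matrices with 0-based indices: paper entry (j,l) is
   entry (j-1,l-1) here. *)

definition Atilde :: "nat \<Rightarrow> (nat \<Rightarrow> real) \<Rightarrow> real mat" where
  "Atilde N c = mat (N+1) (N+1) (\<lambda>(r, s).
     let j = r + 1; l = s + 1 in
     if l \<le> N then
       (if l = j + 1 then c j else if j = l + 1 then - c l else 0)
     else
       (if even j then 0 else
          (let i = (j + 1) div 2 in
            (c (N+1))^2 * (\<Prod>q\<in>{i..(N-1) div 2}. c (2*q))
                        / (\<Prod>q\<in>{i..(N+1) div 2}. c (2*q - 1))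
            + (if i = (N+1) div 2 then c N else 0))))"

end

theory Submission imports Defs begin

(* Away from its last column, A = Atilde N c is the skew tridiagonal
   matrix with superdiagonal c 1, ..., c N, and its last column is c (N+1)^2 z + c N e_(N-1) for a
   vector z with A z = -e_N. This makes z orthogonal to the first N-1 observability rows e_1^T A^m,
   so these rows only see the tridiagonal part: e_1^T A^m ends with the entry c 2 * ... * c (m+1)
   at position m+1.
   Read column by column, S A = A' S shows that if columns n-1 and n of S are eps e_(n-1) and
   eps e_n with signs eps, then column n+1 is eps (n+1) e_(n+1) with
   eps (n+1) c (n+1) = eps n c' (n+1). Comparing observability rows, e_1^T A^m = e_1^T A'^m S, gives
   the transposed relation eps n c (n+1) = eps (n+1) c' (n+1), and the two relations force
   eps (n+1) = +-1. *)

definition zvec :: "nat \<Rightarrow> (nat \<Rightarrow> real) \<Rightarrow> real vec" where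
  "zvec N c = vec (N+1) (\<lambda>r. if even r
     then (\<Prod>q\<in>{(r+2) div 2..(N-1) div 2}. c (2*q)) / (\<Prod>q\<in>{(r+2) div 2..(N+1) div 2}. c (2*q - 1))
     else 0)"

lemma Atilde_carrier [simp]: "Atilde N c \<in> carrier_mat (N+1) (N+1)"
  unfolding Atilde_def by simp

lemma dim_Atilde [simp]: "dim_row (Atilde N c) = N+1" "dim_col (Atilde N c) = N+1"
  unfolding Atilde_def by simp_all

lemma dim_zvec [simp]: "dim_vec (zvec N c) = N+1"
  unfolding zvec_def by simp

lemma zvec_carrier: "zvec N c \<in> carrier_vec (N+1)"
  unfolding carrier_vec_def by simp

lemma Atilde_nth:
  assumes "r \<le> N" "s < N"
  shows "Atilde N c $$ (r,s) = (if s = r+1 then c (r+1) else if r = s+1 then - c (s+1) else 0)"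
  using assms unfolding Atilde_def by (auto simp: Let_def)

lemma Atilde_nth_last:
  assumes "odd N" "r \<le> N"
  shows "Atilde N c $$ (r,N) = c (N+1)^2 * zvec N c $ r + (if r = N - 1 then c N else 0)"
proof (cases "even r")
  case True
  then have "(r + 2) div 2 = (N + 1) div 2 \<longleftrightarrow> r = N - 1" using assms by presburger
  then show ?thesis using assms True unfolding Atilde_def zvec_def by (auto simp: Let_def)
next
  case False
  then have "r \<noteq> N - 1" using assms by presburger
  then show ?thesis using assms False unfolding Atilde_def zvec_def by (auto simp: Let_def)
qed

lemma zvec_nth_odd: "odd r \<Longrightarrow> r \<le> N \<Longrightarrow> zvec N c $ r = 0"
  unfolding zvec_def by simp

lemma zvec_nth_last:
  assumes "odd N"
  shows "zvec N c $ (N-1) = 1 / c N"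
proof -
  have "(N-1+2) div 2 = (N+1) div 2" "2 * ((N+1) div 2) - 1 = N" using assms by presburger+
  moreover have "{(N+1) div 2..(N-1) div 2} = {}" using assms by auto
  ultimately show ?thesis using assms unfolding zvec_def by simp
qed

lemma zvec_nth_step:
  assumes "odd N" "odd r" "r + 1 < N" "c r \<noteq> 0"
  shows "c r * zvec N c $ (r-1) = c (r+1) * zvec N c $ (r+1)"
proof -
  define i where "i = (r+1) div 2"
  define P where "P j = (\<Prod>q\<in>{j..(N-1) div 2}. c (2*q))" for j
  define Q where "Q j = (\<Prod>q\<in>{j..(N+1) div 2}. c (2*q - 1))" for j
  have i: "(r - 1 + 2) div 2 = i" "(r + 1 + 2) div 2 = Suc i" "2 * i = r + 1" "2 * i - 1 = r"
    and iN: "i \<le> (N-1) div 2" "i \<le> (N+1) div 2"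
    using assms unfolding i_def by presburger+
  have "even (r-1)" "even (r+1)" "r - 1 < N + 1" "r + 1 < N + 1" using assms by presburger+
  then have z: "zvec N c $ (r-1) = P i / Q i" "zvec N c $ (r+1) = P (Suc i) / Q (Suc i)"
    unfolding zvec_def P_def Q_def by (simp_all only: index_vec i(1,2) if_True)
  have "P i = c (r+1) * P (Suc i)" "Q i = c r * Q (Suc i)"
    unfolding P_def Q_def using iN by (subst prod.atLeast_Suc_atMost; simp add: i)+
  then show ?thesis unfolding z using assms by simp
qed

lemma Atilde_mult_zvec:
  assumes "odd N" "\<forall>j\<in>{1..N+1}. c j \<noteq> 0"
  shows "Atilde N c *\<^sub>v zvec N c = - unit_vec (N+1) N"
proof (rule eq_vecI)
  fix r assume "r < dim_vec (- unit_vec (N+1) N)"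
  then have r: "r \<le> N" by simp
  have "(Atilde N c *\<^sub>v zvec N c) $ r = (\<Sum>p<N+1. Atilde N c $$ (r,p) * zvec N c $ p)"
    using r by (simp add: scalar_prod_def atLeast0LessThan)
  also have "\<dots> = (\<Sum>p<N. Atilde N c $$ (r,p) * zvec N c $ p)"
    using assms(1) by (simp add: zvec_nth_odd)
  also have "\<dots> = (\<Sum>p<N. (if p = r + 1 then c (r+1) * zvec N c $ (r+1) else 0)
                        + (if p = r - 1 \<and> 1 \<le> r then - c r * zvec N c $ (r-1) else 0))"
    using r by (intro sum.cong) (auto simp: Atilde_nth)
  also have "\<dots> = (if r + 1 < N then c (r+1) * zvec N c $ (r+1) else 0)
                 - (if 1 \<le> r then c r * zvec N c $ (r-1) else 0)"
    using r by (cases "1 \<le> r") (auto simp: sum.distrib sum.delta)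
  also have "\<dots> = (- unit_vec (N+1) N) $ r"
  proof (cases "r = N")
    case True
    then show ?thesis using assms zvec_nth_last[of N c] by (cases N) auto
  next
    case False
    show ?thesis
    proof (cases "even r")
      case True
      then show ?thesis using False r by (auto simp: zvec_nth_odd)
    next
      case odd: False
      then have rN: "r + 1 < N" "1 \<le> r" using False r assms(1) by presburger+
      then have "c r \<noteq> 0" using assms(2) by auto
      then show ?thesis using zvec_nth_step[of N r c] odd rN assms(1) by auto
    qed
  qed
  finally show "(Atilde N c *\<^sub>v zvec N c) $ r = (- unit_vec (N+1) N) $ r" .
qed simp

lemma transpose_Atilde_mult_vec_nth:
  assumes "w \<in> carrier_vec (N+1)" "s < N"
  shows "(transpose_mat (Atilde N c) *\<^sub>v w) $ s
           = (if s = 0 then 0 else c s * w $ (s-1)) - c (s+1) * w $ (s+1)"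
proof -
  have "(transpose_mat (Atilde N c) *\<^sub>v w) $ s = (\<Sum>r<N+1. Atilde N c $$ (r,s) * w $ r)"
    using assms by (simp add: scalar_prod_def atLeast0LessThan)
  also have "\<dots> = (\<Sum>r<N+1. (if r = s - 1 \<and> s \<noteq> 0 then c s * w $ (s-1) else 0)
                             - (if r = s + 1 then c (s+1) * w $ (s+1) else 0))"
    using assms(2) by (intro sum.cong) (auto simp: Atilde_nth)
  also have "\<dots> = (if s = 0 then 0 else c s * w $ (s-1)) - c (s+1) * w $ (s+1)"
    using assms(2) by (auto simp: sum_subtractf sum.delta)
  finally show ?thesis .
qed

lemma transpose_Atilde_mult_vec_last:
  assumes "odd N" "w \<in> carrier_vec (N+1)"
  shows "(transpose_mat (Atilde N c) *\<^sub>v w) $ N = c (N+1)^2 * (w \<bullet> zvec N c) + c N * w $ (N-1)"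
proof -
  have "(transpose_mat (Atilde N c) *\<^sub>v w) $ N = (\<Sum>r<N+1. Atilde N c $$ (r,N) * w $ r)"
    using assms by (simp add: scalar_prod_def atLeast0LessThan)
  also have "\<dots> = (\<Sum>r<N+1. c (N+1)^2 * (w $ r * zvec N c $ r) + (if r = N - 1 then c N * w $ (N-1) else 0))"
    using assms(1) by (intro sum.cong) (auto simp: Atilde_nth_last algebra_simps)
  also have "\<dots> = c (N+1)^2 * (w \<bullet> zvec N c) + c N * w $ (N-1)"
    using assms(2) by (simp add: sum.distrib scalar_prod_def atLeast0LessThan flip: sum_distrib_left)
  finally show ?thesis .
qed

lemma funpow_mult_mat_vec_carrier:
  assumes "A \<in> carrier_mat n n" "v \<in> carrier_vec n"
  shows "((*\<^sub>v) A ^^ m) v \<in> carrier_vec n"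
  using assms by (induction m) auto

lemma funpow_mult_mat_vec_intertwine:
  assumes A: "A \<in> carrier_mat n n" and B: "B \<in> carrier_mat n n" and T: "T \<in> carrier_mat n n"
    and AT: "A * T = T * B" and v: "v \<in> carrier_vec n"
  shows "((*\<^sub>v) A ^^ m) (T *\<^sub>v v) = T *\<^sub>v ((*\<^sub>v) B ^^ m) v"
proof (induction m)
  case (Suc m)
  have Bv: "((*\<^sub>v) B ^^ m) v \<in> carrier_vec n" by (rule funpow_mult_mat_vec_carrier[OF B v])
  have "((*\<^sub>v) A ^^ Suc m) (T *\<^sub>v v) = (A * T) *\<^sub>v ((*\<^sub>v) B ^^ m) v"
    using Suc A T Bv by simp
  also have "\<dots> = T *\<^sub>v ((*\<^sub>v) B ^^ Suc m) v"
    using AT B T Bv by simp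
  finally show ?case .
qed simp

definition obs_vec :: "nat \<Rightarrow> (nat \<Rightarrow> real) \<Rightarrow> nat \<Rightarrow> real vec" where
  "obs_vec N c m = ((*\<^sub>v) (transpose_mat (Atilde N c)) ^^ m) (unit_vec (N+1) 1)"

lemma obs_vec_0 [simp]: "obs_vec N c 0 = unit_vec (N+1) 1"
  unfolding obs_vec_def by simp

lemma obs_vec_Suc: "obs_vec N c (Suc m) = transpose_mat (Atilde N c) *\<^sub>v obs_vec N c m"
  unfolding obs_vec_def by simp

lemma obs_vec_carrier [simp]: "obs_vec N c m \<in> carrier_vec (N+1)"
  unfolding obs_vec_def by (rule funpow_mult_mat_vec_carrier) auto

lemma dim_obs_vec [simp]: "dim_vec (obs_vec N c m) = N+1"
  using obs_vec_carrier unfolding carrier_vec_def by blast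

lemma obs_vec_Suc_scalar_zvec:
  assumes "odd N" "\<forall>j\<in>{1..N+1}. c j \<noteq> 0"
  shows "obs_vec N c (Suc m) \<bullet> zvec N c = - obs_vec N c m $ N"
proof -
  have "obs_vec N c (Suc m) \<bullet> zvec N c = obs_vec N c m \<bullet> (Atilde N c *\<^sub>v zvec N c)"
    unfolding obs_vec_Suc by (rule transpose_vec_mult_scalar[OF Atilde_carrier zvec_carrier obs_vec_carrier])
  then show ?thesis using assms by (simp add: Atilde_mult_zvec)
qed

lemma obs_vec_shape:
  assumes "odd N" "\<forall>j\<in>{1..N+1}. c j \<noteq> 0" "m \<le> N - 2"
  shows "(\<forall>p. m+1 < p \<and> p \<le> N \<longrightarrow> obs_vec N c m $ p = 0)
       \<and> obs_vec N c m $ (m+1) = (\<Prod>i\<in>{2..m+1}. c i)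
       \<and> obs_vec N c m \<bullet> zvec N c = 0"
  using assms(3)
proof (induction m)
  case 0
  have "1 < N + 1" using assms(1) by presburger
  then show ?case using scalar_prod_left_unit[OF zvec_carrier, of 1 N c] by (auto simp: zvec_nth_odd)
next
  case (Suc m)
  then have zero: "\<forall>p. m+1 < p \<and> p \<le> N \<longrightarrow> obs_vec N c m $ p = 0"
    and diag: "obs_vec N c m $ (m+1) = (\<Prod>i\<in>{2..m+1}. c i)" and mN: "m + 3 \<le> N"
    using assms(1) by auto
  have "obs_vec N c (Suc m) $ p = 0" if p: "m+2 < p" "p \<le> N" for p
  proof (cases "p < N")
    case True
    moreover have "obs_vec N c m $ (p-1) = 0" by (rule zero[rule_format]) (use p in linarith)
    moreover have "obs_vec N c m $ (p+1) = 0" by (rule zero[rule_format]) (use p True in linarith)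
    ultimately show ?thesis using p
      by (simp only: obs_vec_Suc transpose_Atilde_mult_vec_nth[OF obs_vec_carrier True]) simp
  next
    case False
    then have "p = N" using p by simp
    then show ?thesis using zero mN Suc.IH Suc.prems
      by (simp only: obs_vec_Suc transpose_Atilde_mult_vec_last[OF assms(1) obs_vec_carrier]) simp
  qed
  moreover have "obs_vec N c (Suc m) $ (m+2) = (\<Prod>i\<in>{2..m+2}. c i)"
    using mN zero diag
    by (simp only: obs_vec_Suc transpose_Atilde_mult_vec_nth[OF obs_vec_carrier]) (simp add: prod.cl_ivl_Suc)
  moreover have "obs_vec N c (Suc m) \<bullet> zvec N c = 0"
    using obs_vec_Suc_scalar_zvec[OF assms(1,2)] zero mN by simp
  ultimately show ?case by simp
qed

lemma col_eq_smult_unit_vec_iff: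
  fixes A :: "'a :: semiring_1 mat"
  assumes "A \<in> carrier_mat n n" "j < n"
  shows "col A j = a \<cdot>\<^sub>v unit_vec n j \<longleftrightarrow> (\<forall>i<n. A $$ (i,j) = (if i = j then a else 0))"
  using assms by (auto simp: vec_eq_iff)

locale Atilde_intertwining =
  fixes N :: nat and c c' :: "nat \<Rightarrow> real" and S :: "real mat"
  assumes odd_N: "odd N"
    and c_nonzero: "\<forall>j\<in>{1..N+1}. c j \<noteq> 0"
    and c'_nonzero: "\<forall>j\<in>{1..N+1}. c' j \<noteq> 0"
    and S_carrier: "S \<in> carrier_mat (N+1) (N+1)"
    and intertwines: "S * Atilde N c = Atilde N c' * S"
    and S_mult_unit_0: "S *\<^sub>v unit_vec (N+1) 0 = unit_vec (N+1) 0"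
    and transpose_S_mult_unit_1: "transpose_mat S *\<^sub>v unit_vec (N+1) 1 = unit_vec (N+1) 1"
begin

definition eps :: "nat \<Rightarrow> real" where
  "eps p = S $$ (p,p)"

lemma obs_vec_intertwine: "obs_vec N c m = transpose_mat S *\<^sub>v obs_vec N c' m"
proof -
  have "transpose_mat (Atilde N c) * transpose_mat S = transpose_mat S * transpose_mat (Atilde N c')"
    using transpose_mult[OF S_carrier Atilde_carrier[of N c]] transpose_mult[OF Atilde_carrier[of N c'] S_carrier]
      intertwines by simp
  then show ?thesis
    using funpow_mult_mat_vec_intertwine[of "transpose_mat (Atilde N c)" "N+1"
        "transpose_mat (Atilde N c')" "transpose_mat S" "unit_vec (N+1) 1" m]
      Atilde_carrier[of N c] Atilde_carrier[of N c'] S_carrier transpose_S_mult_unit_1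
    unfolding obs_vec_def by simp
qed

lemma unit_column_prod_eq:
  assumes "col S (m+1) = a \<cdot>\<^sub>v unit_vec (N+1) (m+1)" "m \<le> N - 2"
  shows "(\<Prod>i\<in>{2..m+1}. c i) = a * (\<Prod>i\<in>{2..m+1}. c' i)"
proof -
  have m: "m + 1 < N + 1" using assms(2) odd_N by presburger
  have "(\<Prod>i\<in>{2..m+1}. c i) = obs_vec N c m $ (m+1)"
    using obs_vec_shape[OF odd_N c_nonzero assms(2)] by simp
  also have "\<dots> = col S (m+1) \<bullet> obs_vec N c' m"
    using obs_vec_intertwine m S_carrier by simp
  also have "\<dots> = a * obs_vec N c' m $ (m+1)"
    using assms(1) scalar_prod_left_unit[OF obs_vec_carrier m] by simp
  also have "\<dots> = a * (\<Prod>i\<in>{2..m+1}. c' i)"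
    using obs_vec_shape[OF odd_N c'_nonzero assms(2)] by simp
  finally show ?thesis .
qed

lemma intertwines_unit_column:
  assumes "col S s = a \<cdot>\<^sub>v unit_vec (N+1) s" "s < N" "i \<le> N"
  shows "(if s = 0 then 0 else c s * S $$ (i, s-1)) - c (s+1) * S $$ (i, s+1)
           = a * Atilde N c' $$ (i,s)"
proof -
  have "row S i \<bullet> col (Atilde N c) s = col (Atilde N c) s \<bullet> row S i"
    by (rule comm_scalar_prod[OF row_carrier_vec[OF _ S_carrier] col_carrier_vec[OF _ Atilde_carrier]])
      (use assms in auto)
  then have "(S * Atilde N c) $$ (i,s) = (transpose_mat (Atilde N c) *\<^sub>v row S i) $ s"
    using assms S_carrier by simp
  also have "\<dots> = (if s = 0 then 0 else c s * S $$ (i, s-1)) - c (s+1) * S $$ (i, s+1)"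
    using transpose_Atilde_mult_vec_nth[OF row_carrier_vec[OF _ S_carrier] assms(2), of i c] assms S_carrier
    by auto
  finally have "(S * Atilde N c) $$ (i,s) = \<dots>" .
  moreover have "(Atilde N c' * S) $$ (i,s) = a * Atilde N c' $$ (i,s)"
    using assms S_carrier by simp
  ultimately show ?thesis using intertwines by simp
qed

lemma nth_unit_column:
  assumes "col S j = a \<cdot>\<^sub>v unit_vec (N+1) j" "i \<le> N" "j \<le> N"
  shows "S $$ (i,j) = (if i = j then a else 0)"
  using assms col_eq_smult_unit_vec_iff[OF S_carrier, of j a] by auto

lemma col_S_0: "col S 0 = eps 0 \<cdot>\<^sub>v unit_vec (N+1) 0" and eps_0: "eps 0 = 1"
proof -
  have "S $$ (i,0) = (if i = 0 then 1 else 0)" if "i < N+1" for i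
    using arg_cong[OF S_mult_unit_0, of "\<lambda>v. v $ i"] that S_carrier by simp
  moreover have "0 < N + 1" by simp
  ultimately show "eps 0 = 1" "col S 0 = eps 0 \<cdot>\<^sub>v unit_vec (N+1) 0"
    unfolding eps_def using col_eq_smult_unit_vec_iff[OF S_carrier, of 0 "S $$ (0,0)"] by auto
qed

lemma eps_1: "eps 1 = 1"
proof -
  have "1 < N + 1" using odd_N by presburger
  then show ?thesis
    using arg_cong[OF transpose_S_mult_unit_1, of "\<lambda>v. v $ 1"] S_carrier unfolding eps_def by simp
qed

lemma next_unit_column:
  assumes "n < N" "col S n = eps n \<cdot>\<^sub>v unit_vec (N+1) n"
    and prev: "n \<noteq> 0 \<Longrightarrow> col S (n-1) = eps (n-1) \<cdot>\<^sub>v unit_vec (N+1) (n-1) \<and> c n * eps (n-1) = eps n * c' n"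
  shows "col S (n+1) = eps (n+1) \<cdot>\<^sub>v unit_vec (N+1) (n+1)" "eps (n+1) * c (n+1) = eps n * c' (n+1)"
proof -
  have c: "c (n+1) \<noteq> 0" using c_nonzero assms(1) by auto
  have entry: "c (n+1) * S $$ (i,n+1) = (if i = n+1 then eps n * c' (n+1) else 0)" if i: "i \<le> N" for i
  proof (cases "n = 0")
    case True
    then show ?thesis using intertwines_unit_column[OF assms(2,1) i] i assms(1) by (auto simp: Atilde_nth)
  next
    case False
    have prev_nth: "S $$ (i, n-1) = (if i = n-1 then eps (n-1) else 0)"
      using prev[OF False] i assms(1) by (intro nth_unit_column) auto
    have eq: "c n * S $$ (i, n-1) - c (n+1) * S $$ (i, n+1) = eps n * Atilde N c' $$ (i,n)"
      using intertwines_unit_column[OF assms(2,1) i] False by simp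
    consider "i = n - 1" | "i = n + 1" | "i \<noteq> n - 1" "i \<noteq> n + 1" by blast
    then show ?thesis
    proof cases
      case 1
      then have "Atilde N c' $$ (i,n) = c' n" using False assms(1) by (simp add: Atilde_nth)
      then show ?thesis using eq prev_nth prev[OF False] 1 c False by simp
    next
      case 2
      then have "Atilde N c' $$ (i,n) = - c' (n+1)" using i assms(1) by (simp add: Atilde_nth)
      moreover have "i \<noteq> n - 1" using 2 by simp
      ultimately show ?thesis using eq prev_nth 2 by simp
    next
      case 3
      then have "Atilde N c' $$ (i,n) = 0" using i assms(1) by (auto simp: Atilde_nth)
      then show ?thesis using eq prev_nth 3 c by simp
    qed
  qed
  then show "eps (n+1) * c (n+1) = eps n * c' (n+1)"
    using assms(1) unfolding eps_def by (simp add: mult.commute)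
  have "S $$ (i,n+1) = (if i = n+1 then eps (n+1) else 0)" if "i < N+1" for i
    using entry[of i] c that unfolding eps_def by auto
  then show "col S (n+1) = eps (n+1) \<cdot>\<^sub>v unit_vec (N+1) (n+1)"
    using col_eq_smult_unit_vec_iff[OF S_carrier] assms(1) by simp
qed

lemma unit_column_sign:
  assumes "1 \<le> n" "n + 1 \<le> N - 1"
    and col_n: "col S n = eps n \<cdot>\<^sub>v unit_vec (N+1) n" and eps_n: "\<bar>eps n\<bar> = 1"
    and col_Suc: "col S (n+1) = eps (n+1) \<cdot>\<^sub>v unit_vec (N+1) (n+1)"
    and rel: "eps (n+1) * c (n+1) = eps n * c' (n+1)"
  shows "\<bar>eps (n+1)\<bar> = 1"
proof -
  define P where "P = (\<Prod>i\<in>{2..n}. c' i)"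
  have P: "P \<noteq> 0" "c' (n+1) \<noteq> 0" unfolding P_def using c'_nonzero assms(2) by auto
  have "(\<Prod>i\<in>{2..n}. c i) = eps n * P"
    using unit_column_prod_eq[of "n-1" "eps n"] col_n assms(1,2) unfolding P_def by simp
  moreover have "(\<Prod>i\<in>{2..n+1}. c i) = eps (n+1) * (\<Prod>i\<in>{2..n+1}. c' i)"
    using unit_column_prod_eq[of n "eps (n+1)"] col_Suc assms(2) by simp
  ultimately have "c (n+1) * (eps n * P) = eps (n+1) * (c' (n+1) * P)"
    using assms(1) unfolding P_def by (simp add: prod.cl_ivl_Suc mult.commute)
  then have obs: "c (n+1) * eps n = eps (n+1) * c' (n+1)"
    using P(1) by (simp add: mult.assoc[symmetric])
  have "eps (n+1) * eps (n+1) * c' (n+1) = eps (n+1) * (c (n+1) * eps n)"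
    using obs by (simp add: mult.assoc)
  also have "\<dots> = eps n * (eps (n+1) * c (n+1))" by (simp add: ac_simps)
  also have "\<dots> = eps n * eps n * c' (n+1)" using rel by (simp add: mult.assoc)
  also have "eps n * eps n = 1" using eps_n abs_mult_self_eq[of "eps n"] by simp
  finally have "eps (n+1)^2 = 1" using P(2) by (simp add: power2_eq_square)
  then show ?thesis by (auto simp: power2_eq_1_iff)
qed

lemma unit_columns:
  assumes "1 \<le> n" "n \<le> N - 1"
  shows "\<forall>p\<le>n. col S p = eps p \<cdot>\<^sub>v unit_vec (N+1) p \<and> \<bar>eps p\<bar> = 1
                 \<and> (p \<noteq> 0 \<longrightarrow> eps p * c p = eps (p-1) * c' p)"
  using assms
proof (induction n rule: nat_induct_at_least)
  case base
  have "0 < N" using odd_N by presburger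
  then have "col S 1 = eps 1 \<cdot>\<^sub>v unit_vec (N+1) 1" "eps 1 * c 1 = eps 0 * c' 1"
    using next_unit_column[of 0] col_S_0 by simp_all
  then show ?case using col_S_0 eps_0 eps_1 by (auto simp: le_Suc_eq)
next
  case (Suc n)
  then have IH: "\<forall>p\<le>n. col S p = eps p \<cdot>\<^sub>v unit_vec (N+1) p \<and> \<bar>eps p\<bar> = 1
                 \<and> (p \<noteq> 0 \<longrightarrow> eps p * c p = eps (p-1) * c' p)" by simp
  have "c n * eps (n-1) = eps n * c' n"
  proof -
    have "eps n * c n = eps (n-1) * c' n" "\<bar>eps n\<bar> = 1" "\<bar>eps (n-1)\<bar> = 1" using IH Suc.hyps by auto
    then show ?thesis by (auto simp: abs_if split: if_splits)
  qed
  then have "col S (n+1) = eps (n+1) \<cdot>\<^sub>v unit_vec (N+1) (n+1)" "eps (n+1) * c (n+1) = eps n * c' (n+1)"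
    using next_unit_column[of n] IH Suc.prems by auto
  moreover have "\<bar>eps (n+1)\<bar> = 1"
    using unit_column_sign[of n] calculation IH Suc.hyps Suc.prems by auto
  ultimately show ?case using IH by (auto simp: le_Suc_eq)
qed

lemma c_1_eq: "c 1 = c' 1"
proof -
  have "0 < N" using odd_N by presburger
  then show ?thesis using next_unit_column(2)[of 0] col_S_0 eps_0 eps_1 by simp
qed

lemma unit_column_sign_le:
  assumes "3 \<le> N" "p \<le> N - 1"
  shows "col S p = eps p \<cdot>\<^sub>v unit_vec (N+1) p" "eps p \<in> {1, -1}"
proof -
  have "\<forall>p'\<le>N-1. col S p' = eps p' \<cdot>\<^sub>v unit_vec (N+1) p' \<and> \<bar>eps p'\<bar> = 1"
    using unit_columns[of "N-1"] assms(1) by simp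
  then have "col S p = eps p \<cdot>\<^sub>v unit_vec (N+1) p" "\<bar>eps p\<bar> = 1" using assms(2) by auto
  then show "col S p = eps p \<cdot>\<^sub>v unit_vec (N+1) p" "eps p \<in> {1, -1}" by (auto simp: abs_if split: if_splits)
qed

lemma abs_c_eq:
  assumes "3 \<le> N" "1 \<le> q" "q \<le> N - 1"
  shows "\<bar>c q\<bar> = \<bar>c' q\<bar>"
proof -
  have "\<bar>eps q * c q\<bar> = \<bar>eps (q-1) * c' q\<bar>" "\<bar>eps q\<bar> = 1" "\<bar>eps (q-1)\<bar> = 1"
    using unit_columns[of "N-1"] assms by auto
  then show ?thesis by (simp add: abs_mult)
qed

end

theorem lemma5:
  fixes N :: nat and c c' :: "nat \<Rightarrow> real" and S :: "real mat"
  assumes "odd N" and "N \<ge> 5"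
    and "\<forall>j\<in>{1..N+1}. c j \<noteq> 0"
    and "\<forall>j\<in>{1..N+1}. c' j \<noteq> 0"
    and "S \<in> carrier_mat (N+1) (N+1)"
    and "det S \<noteq> 0"
    and "S * Atilde N c = Atilde N c' * S"
    and "S *\<^sub>v unit_vec (N+1) 0 = unit_vec (N+1) 0"
    and "transpose_mat S *\<^sub>v unit_vec (N+1) 1 = unit_vec (N+1) 1"
  shows "\<forall>k. 3 \<le> k \<and> k \<le> N - 1 \<longrightarrow>
           (col S 0 = unit_vec (N+1) 0 \<and> col S 1 = unit_vec (N+1) 1 \<and>
            (\<exists>\<epsilon> :: nat \<Rightarrow> real. \<forall>j\<in>{3..k}.
                 \<epsilon> j \<in> {1, -1} \<and> col S (j - 1) = \<epsilon> j \<cdot>\<^sub>v unit_vec (N+1) (j - 1)))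
           \<and> c 1 = c' 1 \<and> \<bar>c 2\<bar> = \<bar>c' 2\<bar>
           \<and> (\<forall>j\<in>{1..k-2}. \<bar>c (j+2)\<bar> = \<bar>c' (j+2)\<bar>)"
proof -
  interpret Atilde_intertwining N c c' S
    using assms(1-5,7-9) by unfold_locales
  have N: "3 \<le> N" using assms(2) by simp
  have "col S 0 = unit_vec (N+1) 0" "col S 1 = unit_vec (N+1) 1"
    using unit_column_sign_le(1)[OF N, of 0] unit_column_sign_le(1)[OF N, of 1] eps_0 eps_1 N by auto
  moreover have "\<forall>j\<in>{3..k}. eps (j-1) \<in> {1, -1} \<and> col S (j-1) = eps (j-1) \<cdot>\<^sub>v unit_vec (N+1) (j-1)"
    if "k \<le> N - 1" for k
  proof
    fix j assume "j \<in> {3..k}"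
    then have "j - 1 \<le> N - 1" using that by auto
    then show "eps (j-1) \<in> {1, -1} \<and> col S (j-1) = eps (j-1) \<cdot>\<^sub>v unit_vec (N+1) (j-1)"
      using unit_column_sign_le[OF N] by blast
  qed
  moreover have "\<bar>c q\<bar> = \<bar>c' q\<bar>" if "1 \<le> q" "q \<le> N - 1" for q
    using abs_c_eq[OF N that] .
  ultimately show ?thesis using c_1_eq N by fastforce
qed

end
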